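(* Let $\Bbbk$ be a field, $S=\Bbbk[x,y,z]$, and let $I\subset S$ be a monomial ideal generated in degree $d$. Then $I$ has a $d$-linear resolution if and only if the graph $G_I(u,v)$ is connected for all $u,v\in\mathcal G(I)$ and $I$ has no bad configuration in $\Delta(d)$.
   Context: $\mathcal G(I)$ is the minimal monomial generating set of $I$. $I$ has a $d$-linear resolution if $\beta_{i,i+j}(I)=0$ for all $i\ge 0$ and $j\neq d$. The dual graph $G_I$ has vertex set $\mathcal G(I)$, and $\{f,g\}$ is an edge iff $\deg\operatorname{lcm}(f,g)=\deg f+1=\deg g+1$. For $f,g\in\mathcal G(I)$, $G_I(f,g)$ is the induced subgraph of $G_I$ on $\{h\in\mathcal G(I): h \text{ divides } \operatorname{lcm}(f,g)\}$. $\Delta(d)$ is the dual graph of $(x,y,z)^d$. For a monomial $f$, its $d$-shadow is the set of degree-$d$ monomials dividing $f$. $I$ has a bad configuration in $\Delta(d)$ if there exists a nonempty set $M$ of degree-$d$ monomials not in $I$ such that $M$ is the $d$-shadow of some monomial $f\in S$ and each of the $d$-shadows of $fx,fy,fz$ meets $\mathcal G(I)$. *)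

theory Defs
  imports Main
begin

text \<open>Monomials of S = k[x,y,z] are represented by exponent triples (a,b,c) for x^a y^b z^c.
  A monomial ideal I is represented by the set of monomials it contains (an upward closed set
  w.r.t. divisibility); I is the k-span of these monomials.\<close>

type_synonym mono = "nat \<times> nat \<times> nat"

fun mdeg :: "mono \<Rightarrow> nat" where
  "mdeg (a, b, c) = a + b + c"

fun mdvd :: "mono \<Rightarrow> mono \<Rightarrow> bool" where
  "mdvd (a, b, c) (a', b', c') \<longleftrightarrow> a \<le> a' \<and> b \<le> b' \<and> c \<le> c'"

fun mlcm :: "mono \<Rightarrow> mono \<Rightarrow> mono" where
  "mlcm (a, b, c) (a', b', c') = (max a a', max b b', max c c')"

fun mexp :: "mono \<Rightarrow> nat \<Rightarrow> nat" where
  "mexp (a, b, c) j = (if j = 0 then a else if j = 1 then b else if j = 2 then c else 0)"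

definition mx :: "mono \<Rightarrow> mono" where "mx m = (case m of (a, b, c) \<Rightarrow> (Suc a, b, c))"
definition my :: "mono \<Rightarrow> mono" where "my m = (case m of (a, b, c) \<Rightarrow> (a, Suc b, c))"
definition mz :: "mono \<Rightarrow> mono" where "mz m = (case m of (a, b, c) \<Rightarrow> (a, b, Suc c))"

definition monomial_ideal :: "mono set \<Rightarrow> bool" where
  "monomial_ideal I \<longleftrightarrow> (\<forall>m\<in>I. \<forall>m'. mdvd m m' \<longrightarrow> m' \<in> I)"

definition mingens :: "mono set \<Rightarrow> mono set" where
  "mingens I = {m \<in> I. \<forall>m'\<in>I. mdvd m' m \<longrightarrow> m' = m}"

definition generated_in_degree :: "mono set \<Rightarrow> nat \<Rightarrow> bool" where
  "generated_in_degree I d \<longleftrightarrow> (\<forall>g\<in>mingens I. mdeg g = d)"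

text \<open>Tor_i(k,I)_\<alpha> = H_i(K(x,y,z) \<otimes> I)_\<alpha>. The multidegree-\<alpha> part of
  K_i \<otimes> I has k-basis the e_F with F \<subseteq> {0,1,2}, card F = i, \<alpha> - e_F \<ge> 0
  and x^(\<alpha> - e_F) \<in> I.\<close>

definition mono_minus_set :: "mono \<Rightarrow> nat set \<Rightarrow> mono" where
  "mono_minus_set \<alpha> F =
     (mexp \<alpha> 0 - (if 0 \<in> F then 1 else 0),
      mexp \<alpha> 1 - (if 1 \<in> F then 1 else 0),
      mexp \<alpha> 2 - (if 2 \<in> F then 1 else 0))"

definition kbasis :: "mono set \<Rightarrow> mono \<Rightarrow> nat \<Rightarrow> nat set set" where
  "kbasis I \<alpha> i = {F. F \<subseteq> {0, 1, 2} \<and> card F = i \<and> (\<forall>j\<in>F. 1 \<le> mexp \<alpha> j)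
                     \<and> mono_minus_set \<alpha> F \<in> I}"

definition kchain :: "mono set \<Rightarrow> mono \<Rightarrow> nat \<Rightarrow> (nat set \<Rightarrow> 'k::field) \<Rightarrow> bool" where
  "kchain I \<alpha> i c \<longleftrightarrow> (\<forall>F. F \<notin> kbasis I \<alpha> i \<longrightarrow> c F = 0)"

text \<open>Koszul sign: d(e_F) = \<Sum>_{j\<in>F} (-1)^{#\<lbrace>l\<in>F. l<j\<rbrace>} x_j e_{F-{j}}.\<close>
definition ksign :: "nat \<Rightarrow> nat set \<Rightarrow> 'k::field" where
  "ksign j F = (-1) ^ card {l \<in> F. l < j}"

definition kdiff :: "(nat set \<Rightarrow> 'k::field) \<Rightarrow> (nat set \<Rightarrow> 'k)" where
  "kdiff c G = (if G \<subseteq> {0, 1, 2}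
                then (\<Sum>j\<in>{0, 1, 2} - G. ksign j (insert j G) * c (insert j G))
                else 0)"

definition tor_vanishes :: "'k::field itself \<Rightarrow> mono set \<Rightarrow> nat \<Rightarrow> mono \<Rightarrow> bool" where
  "tor_vanishes _ I i \<alpha> \<longleftrightarrow>
     (\<forall>c :: nat set \<Rightarrow> 'k. kchain I \<alpha> i c \<and> kdiff c = (\<lambda>_. 0) \<longrightarrow>
        (\<exists>b. kchain I \<alpha> (Suc i) b \<and> kdiff b = c))"

text \<open>\<beta>_{i,j}(I) = dim_k Tor_i(k,I)_j = 0.\<close>
definition betti_zero :: "'k::field itself \<Rightarrow> mono set \<Rightarrow> nat \<Rightarrow> nat \<Rightarrow> bool" where
  "betti_zero k I i j \<longleftrightarrow> (\<forall>\<alpha>. mdeg \<alpha> = j \<longrightarrow> tor_vanishes k I i \<alpha>)"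

definition has_linear_resolution :: "'k::field itself \<Rightarrow> mono set \<Rightarrow> nat \<Rightarrow> bool" where
  "has_linear_resolution k I d \<longleftrightarrow> (\<forall>i j. j \<noteq> d \<longrightarrow> betti_zero k I i (i + j))"

definition dual_edge :: "mono \<Rightarrow> mono \<Rightarrow> bool" where
  "dual_edge f g \<longleftrightarrow> mdeg (mlcm f g) = mdeg f + 1 \<and> mdeg (mlcm f g) = mdeg g + 1"

definition graph_connected :: "'a set \<Rightarrow> ('a \<Rightarrow> 'a \<Rightarrow> bool) \<Rightarrow> bool" where
  "graph_connected V E \<longleftrightarrow>
     (\<forall>a\<in>V. \<forall>b\<in>V. (\<lambda>x y. x \<in> V \<and> y \<in> V \<and> E x y)\<^sup>*\<^sup>* a b)"

definition dual_sub_vertices :: "mono set \<Rightarrow> mono \<Rightarrow> mono \<Rightarrow> mono set" where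
  "dual_sub_vertices I f g = {h \<in> mingens I. mdvd h (mlcm f g)}"

definition GI_connected :: "mono set \<Rightarrow> mono \<Rightarrow> mono \<Rightarrow> bool" where
  "GI_connected I f g \<longleftrightarrow> graph_connected (dual_sub_vertices I f g) dual_edge"

definition shadow :: "nat \<Rightarrow> mono \<Rightarrow> mono set" where
  "shadow d f = {m. mdeg m = d \<and> mdvd m f}"

definition bad_configuration :: "mono set \<Rightarrow> nat \<Rightarrow> bool" where
  "bad_configuration I d \<longleftrightarrow>
     (\<exists>M f. M \<noteq> {} \<and> (\<forall>m\<in>M. mdeg m = d \<and> m \<notin> I) \<and> M = shadow d f
        \<and> shadow d (mx f) \<inter> mingens I \<noteq> {}
        \<and> shadow d (my f) \<inter> mingens I \<noteq> {}
        \<and> shadow d (mz f) \<inter> mingens I \<noteq> {})"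

end

theory Submission
  imports Defs
begin

(* Graded Betti numbers are read off from the Koszul complex K(x,y,z) tensor I: in multidegree
   alpha its degree-i part has a basis indexed by the i-subsets F of {x,y,z} with x^alpha / x_F in I.
   With three variables Tor_i vanishes below degree d + i, Tor_0 lives in degree d and Tor_i = 0 for
   i >= 3, so linearity is decided by Tor_1 in degrees >= d + 2 and Tor_2 in degrees >= d + 3.
   Tor_1 vanishes at alpha iff the variables v with x^alpha / v in I form a connected graph, v ~ w
   when x^alpha / (vw) is in I; by induction on |alpha| this holds in all degrees >= d + 2 iff every
   G_I(u,v) is connected.  Tor_2 vanishes at alpha iff f = x^alpha / (xyz) lies in I whenever xf, yf
   and zf do, and in degrees >= d + 3 a failure of this is exactly a bad configuration. *)

declare One_nat_def [simp del]
  \<comment> \<open>faces such as {0,1} must keep the numeral 1 for the Koszul formulas below to apply\<close>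

lemma mexp_eq_0: "j \<notin> {0,1,2} \<Longrightarrow> mexp m j = 0"
  by (cases m) auto

lemma mdvd_iff_mexp: "mdvd x y \<longleftrightarrow> (\<forall>t. mexp x t \<le> mexp y t)"
proof -
  obtain a b c a' b' c' where xy: "x = (a, b, c)" "y = (a', b', c')"
    by (cases x; cases y)
  have "mdvd x y \<longleftrightarrow> mexp x 0 \<le> mexp y 0 \<and> mexp x 1 \<le> mexp y 1 \<and> mexp x 2 \<le> mexp y 2"
    by (simp add: xy)
  also have "\<dots> \<longleftrightarrow> (\<forall>t. mexp x t \<le> mexp y t)"
    using mexp_eq_0[of _ x] mexp_eq_0[of _ y] by (metis insertE le_refl singletonD)
  finally show ?thesis .
qed

lemma mdvd_refl [simp]: "mdvd x x"
  by (cases x) simp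

lemma mdvd_trans: "mdvd x y \<Longrightarrow> mdvd y z \<Longrightarrow> mdvd x z"
  by (cases x; cases y; cases z) simp

lemma mdeg_le_if_mdvd: "mdvd x y \<Longrightarrow> mdeg x \<le> mdeg y"
  by (cases x; cases y) simp

lemma mdeg_less_if_mdvd: "mdvd x y \<Longrightarrow> x \<noteq> y \<Longrightarrow> mdeg x < mdeg y"
  by (cases x; cases y) auto

lemma ex_mexp_less_if_mdvd:
  assumes "mdvd x y" "x \<noteq> y"
  obtains t where "mexp x t < mexp y t"
proof -
  obtain a b c a' b' c' where xy: "x = (a, b, c)" "y = (a', b', c')"
    by (cases x; cases y)
  have "mexp x 0 < mexp y 0 \<or> mexp x 1 < mexp y 1 \<or> mexp x 2 < mexp y 2"
    using assms by (auto simp: xy)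
  with that show thesis by blast
qed

lemma mdvd_mlcm_iff: "mdvd (mlcm x y) z \<longleftrightarrow> mdvd x z \<and> mdvd y z"
  by (cases x; cases y; cases z) auto

lemma mdvd_mlcm_left: "mdvd x (mlcm x y)" and mdvd_mlcm_right: "mdvd y (mlcm x y)"
  by (cases x; cases y; simp)+

lemma mexp_mlcm: "mexp (mlcm x y) t = max (mexp x t) (mexp y t)"
  by (cases x; cases y) auto

lemma mdeg_mx: "mdeg (mx f) = Suc (mdeg f)" and mdeg_my: "mdeg (my f) = Suc (mdeg f)"
  and mdeg_mz: "mdeg (mz f) = Suc (mdeg f)"
  by (cases f; simp add: mx_def my_def mz_def)+

lemma mexp_mono_minus_set:
  "mexp (mono_minus_set \<alpha> F) t = mexp \<alpha> t - (if t \<in> F then 1 else 0)"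
  by (cases \<alpha>) (auto simp: mono_minus_set_def)

lemma mdvd_mono_minus_set_self: "mdvd (mono_minus_set \<alpha> F) \<alpha>"
  by (cases \<alpha>) (simp add: mono_minus_set_def)

lemma mdvd_mono_minus_setI:
  assumes "mdvd x \<alpha>" "\<forall>t\<in>F. mexp x t < mexp \<alpha> t"
  shows "mdvd x (mono_minus_set \<alpha> F)"
  unfolding mdvd_iff_mexp mexp_mono_minus_set
proof
  fix t
  show "mexp x t \<le> mexp \<alpha> t - (if t \<in> F then 1 else 0)"
    using assms by (cases "t \<in> F") (auto simp: mdvd_iff_mexp)
qed

lemma subset_012_cases:
  "F \<subseteq> {0,1,2::nat} \<Longrightarrow>
     F = {} \<or> F = {0} \<or> F = {1} \<or> F = {2} \<or> F = {0,1} \<or> F = {0,2} \<or> F = {1,2} \<or> F = {0,1,2}"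
  by (simp add: Pow_insert flip: Pow_iff) blast

lemma finite_face: "G \<subseteq> {0,1,2::nat} \<Longrightarrow> finite G"
  by (erule finite_subset) simp

lemma mdeg_mono_minus_set:
  assumes "F \<subseteq> {0,1,2}" "\<forall>t\<in>F. 1 \<le> mexp \<alpha> t"
  shows "mdeg (mono_minus_set \<alpha> F) + card F = mdeg \<alpha>"
  using subset_012_cases[OF assms(1)] assms(2)
  by (cases \<alpha>) (elim disjE; simp add: mono_minus_set_def; arith)

lemma monomial_idealD: "monomial_ideal I \<Longrightarrow> m \<in> I \<Longrightarrow> mdvd m m' \<Longrightarrow> m' \<in> I"
  unfolding monomial_ideal_def by blast

lemma mingens_subset: "mingens I \<subseteq> I"
  by (auto simp: mingens_def)

lemma mingens_minimal: "g \<in> mingens I \<Longrightarrow> h \<in> I \<Longrightarrow> mdvd h g \<Longrightarrow> h = g"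
  by (simp add: mingens_def)

lemma ex_mingens_mdvd:
  assumes "m \<in> I"
  obtains g where "g \<in> mingens I" "mdvd g m"
proof -
  obtain g where g: "g \<in> I" "mdvd g m"
    and least: "\<forall>h. h \<in> I \<and> mdvd h m \<longrightarrow> mdeg g \<le> mdeg h"
    using ex_has_least_nat[of "\<lambda>g. g \<in> I \<and> mdvd g m" m mdeg] assms by auto
  have "g \<in> mingens I"
    unfolding mingens_def
  proof (intro CollectI conjI ballI impI)
    fix h assume "h \<in> I" "mdvd h g"
    then show "h = g"
      using least g(2) mdvd_trans mdeg_less_if_mdvd by (meson leD)
  qed (fact g(1))
  then show thesis using g(2) by (rule that)
qed

lemma mdeg_mingens: "generated_in_degree I d \<Longrightarrow> g \<in> mingens I \<Longrightarrow> mdeg g = d"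
  by (simp add: generated_in_degree_def)

lemma mdeg_ge_if_mem: "generated_in_degree I d \<Longrightarrow> m \<in> I \<Longrightarrow> d \<le> mdeg m"
  by (metis ex_mingens_mdvd mdeg_le_if_mdvd mdeg_mingens)

section \<open>The Koszul complex\<close>

lemma kbasis_iff_mingens:
  assumes "monomial_ideal I"
  shows "F \<in> kbasis I \<alpha> i \<longleftrightarrow>
           card F = i \<and> (\<exists>g\<in>mingens I. mdvd g \<alpha> \<and> (\<forall>t\<in>F. mexp g t < mexp \<alpha> t))"
proof
  assume F: "F \<in> kbasis I \<alpha> i"
  then obtain g where g: "g \<in> mingens I" "mdvd g (mono_minus_set \<alpha> F)"
    by (auto simp: kbasis_def elim: ex_mingens_mdvd)
  have "mexp g t < mexp \<alpha> t" if "t \<in> F" for t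
  proof -
    have "mexp g t \<le> mexp \<alpha> t - 1"
      using mdvd_iff_mexp[THEN iffD1, OF g(2), rule_format, of t] that
      by (simp add: mexp_mono_minus_set)
    moreover have "1 \<le> mexp \<alpha> t"
      using F that by (simp add: kbasis_def)
    ultimately show ?thesis by linarith
  qed
  moreover have "mdvd g \<alpha>"
    using g(2) mdvd_mono_minus_set_self mdvd_trans by blast
  moreover have "card F = i"
    using F by (simp add: kbasis_def)
  ultimately show "card F = i \<and> (\<exists>g\<in>mingens I. mdvd g \<alpha> \<and> (\<forall>t\<in>F. mexp g t < mexp \<alpha> t))"
    using g(1) by blast
next
  assume "card F = i \<and> (\<exists>g\<in>mingens I. mdvd g \<alpha> \<and> (\<forall>t\<in>F. mexp g t < mexp \<alpha> t))"
  then obtain g where g: "card F = i" "g \<in> mingens I" "mdvd g \<alpha>" "\<forall>t\<in>F. mexp g t < mexp \<alpha> t"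
    by blast
  have "F \<subseteq> {0,1,2}"
    using g(4) mexp_eq_0[of _ \<alpha>] by (metis not_less0 subsetI)
  moreover have "\<forall>t\<in>F. 1 \<le> mexp \<alpha> t"
    using g(4) by fastforce
  moreover have "mono_minus_set \<alpha> F \<in> I"
    using g(2-4) mdvd_mono_minus_setI monomial_idealD[OF assms] mingens_subset by blast
  ultimately show "F \<in> kbasis I \<alpha> i"
    using g(1) by (simp add: kbasis_def)
qed

lemma kbasis_singleton_iff_mingens:
  assumes "monomial_ideal I"
  shows "{t} \<in> kbasis I \<alpha> 1 \<longleftrightarrow> (\<exists>g\<in>mingens I. mdvd g \<alpha> \<and> mexp g t < mexp \<alpha> t)"
  by (simp add: kbasis_iff_mingens[OF assms])

lemma mdeg_ge_if_kbasis:
  assumes "generated_in_degree I d" "F \<in> kbasis I \<alpha> i"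
  shows "d + i \<le> mdeg \<alpha>"
  using assms mdeg_ge_if_mem[of I d "mono_minus_set \<alpha> F"] mdeg_mono_minus_set[of F \<alpha>]
  by (auto simp: kbasis_def)

lemma ksign_eq: "ksign j F = (-1) ^ card (F \<inter> {..<j})"
  unfolding ksign_def by (metis Collect_conj_eq Int_commute lessThan_def Collect_mem_eq)

lemma kdiff_simps:
  fixes c :: "nat set \<Rightarrow> 'k::field"
  shows "kdiff c {} = c {0} + c {1} + c {2}"
    and "kdiff c {0} = - c {0,1} - c {0,2}"
    and "kdiff c {1} = c {0,1} - c {1,2}"
    and "kdiff c {2} = c {0,2} + c {1,2}"
    and "kdiff c {0,1} = c {0,1,2}"
    and "kdiff c {0,2} = - c {0,1,2}"
    and "kdiff c {1,2} = c {0,1,2}"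
  by (simp_all add: kdiff_def ksign_eq insert_Diff_if Int_insert_left insert_commute)

lemma face_eq_iff:
  fixes F G :: "nat set"
  assumes "F \<subseteq> {0,1,2}" "G \<subseteq> {0,1,2}"
  shows "F = G \<longleftrightarrow> (0 \<in> F \<longleftrightarrow> 0 \<in> G) \<and> (1 \<in> F \<longleftrightarrow> 1 \<in> G) \<and> (2 \<in> F \<longleftrightarrow> 2 \<in> G)"
  using assms by auto

lemma kchain_zero [simp]: "kchain I \<alpha> i (\<lambda>_. 0)"
  by (simp add: kchain_def)

lemma kdiff_zero [simp]: "kdiff (\<lambda>_. 0) = (\<lambda>_. 0)"
  by (simp add: kdiff_def fun_eq_iff)

lemma kchain_eq_0: "kchain I \<alpha> i c \<Longrightarrow> (G \<subseteq> {0,1,2} \<Longrightarrow> card G \<noteq> i) \<Longrightarrow> c G = 0"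
  by (auto simp: kchain_def kbasis_def)

lemma kdiff_eq_0_if_no_coface:
  "kchain I \<alpha> i c \<Longrightarrow> (\<And>j. j \<in> {0,1,2} - G \<Longrightarrow> insert j G \<notin> kbasis I \<alpha> i) \<Longrightarrow>
     kdiff c G = 0"
  by (simp add: kdiff_def kchain_def)

lemma kdiff_eq_0_if_card:
  assumes c: "kchain I \<alpha> i c" and card: "G \<subseteq> {0,1,2} \<Longrightarrow> card G + 1 \<noteq> i"
  shows "kdiff c G = 0"
proof (cases "G \<subseteq> {0,1,2}")
  case True
  with card finite_face have "insert j G \<notin> kbasis I \<alpha> i" if "j \<in> {0,1,2} - G" for j
    using that by (simp add: kbasis_def)
  with c show ?thesis by (rule kdiff_eq_0_if_no_coface)
qed (simp add: kdiff_def)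

lemma kdiff_eqI:
  assumes b: "kchain I \<alpha> (Suc i) b" and c: "kchain I \<alpha> i c"
    and faces: "\<And>G. G \<subseteq> {0,1,2} \<Longrightarrow> card G = i \<Longrightarrow> kdiff b G = c G"
  shows "kdiff b = c"
proof
  fix G
  show "kdiff b G = c G"
  proof (cases "G \<subseteq> {0,1,2} \<and> card G = i")
    case False
    then show ?thesis
      using kdiff_eq_0_if_card[OF b, of G] kchain_eq_0[OF c, of G] by auto
  qed (use faces in blast)
qed

lemma kdiff_1_chain_eq_0_iff:
  assumes c: "kchain I \<alpha> 1 c"
  shows "kdiff c = (\<lambda>_. 0) \<longleftrightarrow> c {0} + c {1} + c {2} = 0"
proof
  assume "kdiff c = (\<lambda>_. 0)"
  then show "c {0} + c {1} + c {2} = 0"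
    by (metis kdiff_simps(1))
next
  assume sum: "c {0} + c {1} + c {2} = 0"
  show "kdiff c = (\<lambda>_. 0)"
  proof
    fix G :: "nat set"
    show "kdiff c G = 0"
    proof (cases "G = {}")
      case False
      then have "card G \<noteq> 0" if "G \<subseteq> {0,1,2}"
        using finite_face[OF that] by simp
      then show ?thesis
        using kdiff_eq_0_if_card[OF c, of G] by simp
    qed (simp add: sum kdiff_simps)
  qed
qed

lemma kdiff_2_chain_eq_0_iff:
  assumes c: "kchain I \<alpha> 2 c"
  shows "kdiff c = (\<lambda>_. 0) \<longleftrightarrow> c {0,2} = - c {0,1} \<and> c {1,2} = c {0,1}"
proof
  assume "kdiff c = (\<lambda>_. 0)"
  then have "kdiff c {0} = 0" "kdiff c {1} = 0"
    by simp_all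
  then show "c {0,2} = - c {0,1} \<and> c {1,2} = c {0,1}"
    by (simp add: kdiff_simps eq_neg_iff_add_eq_0)
next
  assume rel: "c {0,2} = - c {0,1} \<and> c {1,2} = c {0,1}"
  show "kdiff c = (\<lambda>_. 0)"
  proof
    fix G :: "nat set"
    show "kdiff c G = 0"
    proof (cases "G \<subseteq> {0,1,2} \<and> card G = 1")
      case True
      then consider "G = {0}" | "G = {1}" | "G = {2}"
        using subset_012_cases[of G] by fastforce
      then show ?thesis
        using rel by cases (simp_all add: kdiff_simps)
    next
      case False
      then show ?thesis
        using kdiff_eq_0_if_card[OF c, of G] by auto
    qed
  qed
qed

lemma tor_vanishes_if_kbasis_empty:
  assumes "kbasis I \<alpha> i = {}"
  shows "tor_vanishes (k :: 'k::field itself) I i \<alpha>"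
  unfolding tor_vanishes_def
proof (intro allI impI, elim conjE)
  fix c :: "nat set \<Rightarrow> 'k"
  assume "kchain I \<alpha> i c"
  then have "c = (\<lambda>_. 0)"
    using assms by (auto simp: kchain_def)
  then show "\<exists>b. kchain I \<alpha> (Suc i) b \<and> kdiff b = c"
    by (intro exI[of _ "\<lambda>_. 0"]) simp
qed

lemma tor_vanishes_0I:
  assumes "\<alpha> \<in> I \<Longrightarrow> \<exists>j. {j} \<in> kbasis I \<alpha> 1"
  shows "tor_vanishes (k :: 'k::field itself) I 0 \<alpha>"
  unfolding tor_vanishes_def
proof (intro allI impI, elim conjE)
  fix c :: "nat set \<Rightarrow> 'k"
  assume c: "kchain I \<alpha> 0 c"
  have c_nonempty: "c G = 0" if "G \<noteq> {}" for G
    using kchain_eq_0[OF c] that finite_face by (metis card_0_eq)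
  show "\<exists>b. kchain I \<alpha> (Suc 0) b \<and> kdiff b = c"
  proof (cases "c {} = 0")
    case True
    then have "c = (\<lambda>_. 0)"
      using c_nonempty by (metis ext)
    then show ?thesis
      by (intro exI[of _ "\<lambda>_. 0"]) simp
  next
    case False
    then have "{} \<in> kbasis I \<alpha> 0"
      using c by (auto simp: kchain_def)
    moreover have "mono_minus_set \<alpha> {} = \<alpha>"
      by (cases \<alpha>) (simp add: mono_minus_set_def)
    ultimately obtain j where j: "{j} \<in> kbasis I \<alpha> 1"
      using assms by (auto simp: kbasis_def)
    then have "j \<in> {0,1,2}"
      by (simp add: kbasis_def)
    define b :: "nat set \<Rightarrow> 'k" where "b F = (if F = {j} then c {} else 0)" for F
    have b: "kchain I \<alpha> (Suc 0) b"
      using j by (simp add: kchain_def b_def One_nat_def)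
    have "kdiff b = c"
    proof (rule kdiff_eqI[OF b c])
      fix G :: "nat set"
      assume "G \<subseteq> {0,1,2}" "card G = 0"
      then have "G = {}"
        using finite_face by simp
      then show "kdiff b G = c G"
        using \<open>j \<in> {0,1,2}\<close> by (auto simp: kdiff_simps b_def)
    qed
    with b show ?thesis by blast
  qed
qed

lemma tor_vanishes_ge_3:
  assumes "3 \<le> i"
  shows "tor_vanishes (k :: 'k::field itself) I i \<alpha>"
  unfolding tor_vanishes_def
proof (intro allI impI, elim conjE)
  fix c :: "nat set \<Rightarrow> 'k"
  assume c: "kchain I \<alpha> i c" "kdiff c = (\<lambda>_. 0)"
  have "c {0,1,2} = 0"
    using fun_cong[OF c(2), of "{0,1}"] by (simp add: kdiff_simps)
  moreover have "c G = 0" if "G \<noteq> {0,1,2}" for G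
  proof (rule kchain_eq_0[OF c(1)])
    assume G: "G \<subseteq> {0,1,2}"
    show "card G \<noteq> i"
    proof
      assume "card G = i"
      moreover have "card G \<le> card {0,1,2::nat}"
        using G by (rule card_mono[rotated]) simp
      ultimately have "card G = card {0,1,2::nat}"
        using assms by simp
      with G have "G = {0,1,2}"
        by (rule card_subset_eq[rotated 1]) simp
      with that show False ..
    qed
  qed
  ultimately have "c = (\<lambda>_. 0)"
    by (metis ext)
  then show "\<exists>b. kchain I \<alpha> (Suc i) b \<and> kdiff b = c"
    by (intro exI[of _ "\<lambda>_. 0"]) simp
qed

lemma koszul_triangle_filled_if_tor_vanishes_2:
  assumes tor: "tor_vanishes (k :: 'k::field itself) I 2 \<alpha>"
    and edges: "{0,1} \<in> kbasis I \<alpha> 2" "{0,2} \<in> kbasis I \<alpha> 2" "{1,2} \<in> kbasis I \<alpha> 2"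
  shows "{0,1,2} \<in> kbasis I \<alpha> 3"
proof (rule ccontr)
  assume unfilled: "{0,1,2} \<notin> kbasis I \<alpha> 3"
  define c :: "nat set \<Rightarrow> 'k" where
    "c F = (if F = {0,1} then 1 else if F = {0,2} then -1 else if F = {1,2} then 1 else 0)" for F
  have c: "kchain I \<alpha> 2 c"
    using edges by (auto simp: kchain_def c_def)
  moreover have "kdiff c = (\<lambda>_. 0)"
    by (simp add: kdiff_2_chain_eq_0_iff[OF c] c_def face_eq_iff)
  ultimately obtain b where b: "kchain I \<alpha> 3 b" "kdiff b = c"
    using tor by (auto simp: tor_vanishes_def numeral_3_eq_3 numeral_2_eq_2)
  have "kdiff b {0,1} = 0"
    using b(1) unfilled by (simp add: kdiff_simps kchain_def)
  with b(2) show False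
    by (simp add: c_def)
qed

lemma tor_vanishes_2_if_koszul_triangle_filled:
  assumes filled: "{0,1} \<in> kbasis I \<alpha> 2 \<Longrightarrow> {0,2} \<in> kbasis I \<alpha> 2 \<Longrightarrow> {1,2} \<in> kbasis I \<alpha> 2 \<Longrightarrow>
      {0,1,2} \<in> kbasis I \<alpha> 3"
  shows "tor_vanishes (k :: 'k::field itself) I 2 \<alpha>"
  unfolding tor_vanishes_def
proof (intro allI impI, elim conjE)
  fix c :: "nat set \<Rightarrow> 'k"
  assume c: "kchain I \<alpha> 2 c" "kdiff c = (\<lambda>_. 0)"
  then have c02: "c {0,2} = - c {0,1}" and c12: "c {1,2} = c {0,1}"
    by (simp_all add: kdiff_2_chain_eq_0_iff)
  define b :: "nat set \<Rightarrow> 'k" where "b F = (if F = {0,1,2} then c {0,1} else 0)" for F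
  have "kchain I \<alpha> (Suc 2) b"
    unfolding kchain_def
  proof (intro allI impI)
    fix F assume F: "F \<notin> kbasis I \<alpha> (Suc 2)"
    show "b F = 0"
    proof (cases "F = {0,1,2}")
      case True
      with F filled have "c {0,1} = 0 \<or> c {0,2} = 0 \<or> c {1,2} = 0"
        using c(1) by (auto simp: kchain_def numeral_3_eq_3 numeral_2_eq_2)
      with True show ?thesis
        using c02 c12 by (auto simp: b_def)
    qed (simp add: b_def)
  qed
  moreover have "kdiff b = c"
  proof (rule kdiff_eqI[OF \<open>kchain I \<alpha> (Suc 2) b\<close> c(1)])
    fix G :: "nat set"
    assume "G \<subseteq> {0,1,2}" "card G = 2"
    then consider "G = {0,1}" | "G = {0,2}" | "G = {1,2}"
      using subset_012_cases[of G] by fastforce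
    then show "kdiff b G = c G"
      using c02 c12 by cases (simp_all add: kdiff_simps b_def face_eq_iff)
  qed
  ultimately show "\<exists>b. kchain I \<alpha> (Suc 2) b \<and> kdiff b = c"
    by blast
qed

lemma tor_vanishes_2_iff:
  "tor_vanishes (k :: 'k::field itself) I 2 \<alpha> \<longleftrightarrow>
     ({0,1} \<in> kbasis I \<alpha> 2 \<longrightarrow> {0,2} \<in> kbasis I \<alpha> 2 \<longrightarrow> {1,2} \<in> kbasis I \<alpha> 2 \<longrightarrow>
      {0,1,2} \<in> kbasis I \<alpha> 3)"
  using koszul_triangle_filled_if_tor_vanishes_2 tor_vanishes_2_if_koszul_triangle_filled by blast

section \<open>Koszul homology in homological degree 1\<close>

text \<open>In degrees 1 and 2 the Koszul basis at \<alpha> is a graph on the variables, and Koszul homology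
  in degree 1 is its reduced H_0, which vanishes iff the graph is connected.\<close>

definition koszul_edge :: "mono set \<Rightarrow> mono \<Rightarrow> nat \<Rightarrow> nat \<Rightarrow> bool" where
  "koszul_edge I \<alpha> j l \<longleftrightarrow> j \<noteq> l \<and> {j, l} \<in> kbasis I \<alpha> 2"

definition koszul_connected :: "mono set \<Rightarrow> mono \<Rightarrow> bool" where
  "koszul_connected I \<alpha> \<longleftrightarrow>
     (\<forall>j l. {j} \<in> kbasis I \<alpha> 1 \<longrightarrow> {l} \<in> kbasis I \<alpha> 1 \<longrightarrow> (koszul_edge I \<alpha>)\<^sup>*\<^sup>* j l)"

lemma koszul_edge_sym: "koszul_edge I \<alpha> j l \<Longrightarrow> koszul_edge I \<alpha> l j"
  by (auto simp: koszul_edge_def insert_commute)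

lemma koszul_edge_range: "koszul_edge I \<alpha> j l \<Longrightarrow> j \<in> {0,1,2} \<and> l \<in> {0,1,2}"
  by (auto simp: koszul_edge_def kbasis_def)

lemma koszul_edge_iff_mingens:
  assumes "monomial_ideal I"
  shows "koszul_edge I \<alpha> t s \<longleftrightarrow>
           t \<noteq> s \<and> (\<exists>g\<in>mingens I. mdvd g \<alpha> \<and> mexp g t < mexp \<alpha> t \<and> mexp g s < mexp \<alpha> s)"
  by (auto simp: koszul_edge_def kbasis_iff_mingens[OF assms])

lemma koszul_isolated_if_not_connected:
  assumes "\<not> (koszul_edge I \<alpha>)\<^sup>*\<^sup>* j l"
  shows "(\<forall>t. \<not> koszul_edge I \<alpha> j t) \<or> (\<forall>t. \<not> koszul_edge I \<alpha> l t)"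
proof (rule ccontr)
  assume "\<not> ?thesis"
  then obtain t s where jt: "koszul_edge I \<alpha> j t" and ls: "koszul_edge I \<alpha> l s"
    by blast
  have "j \<noteq> l" "t \<noteq> l" "s \<noteq> j"
    using assms jt koszul_edge_sym[OF ls] by auto
  moreover have "j \<noteq> t" "l \<noteq> s"
    using jt ls by (auto simp: koszul_edge_def)
  ultimately have "t = s"
    using koszul_edge_range[OF jt] koszul_edge_range[OF ls] by auto
  with jt ls have "(koszul_edge I \<alpha>)\<^sup>*\<^sup>* j l"
    by (meson converse_rtranclp_into_rtranclp koszul_edge_sym r_into_rtranclp)
  with assms show False ..
qed

lemma kdiff_eq_0_at_isolated:
  assumes "kchain I \<alpha> 2 b" "\<And>t. \<not> koszul_edge I \<alpha> j t"
  shows "kdiff b {j} = 0"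
  using assms(1)
proof (rule kdiff_eq_0_if_no_coface)
  fix t assume "t \<in> {0,1,2} - {j}"
  then show "insert t {j} \<notin> kbasis I \<alpha> 2"
    using assms(2)[of t] by (auto simp: koszul_edge_def insert_commute)
qed

lemma koszul_cycle_eq_0_at_isolated:
  assumes conn: "koszul_connected I \<alpha>"
    and c: "kchain I \<alpha> 1 c" "c {0} + c {1} + c {2} = 0"
    and isolated: "\<And>t. t \<in> {0,1,2} - {j} \<Longrightarrow> {j, t} \<notin> kbasis I \<alpha> 2"
  shows "c {j} = 0"
proof (cases "{j} \<in> kbasis I \<alpha> 1")
  case True
  have no_edge: "\<not> koszul_edge I \<alpha> j t" for t
  proof
    assume e: "koszul_edge I \<alpha> j t"
    then have "t \<in> {0,1,2} - {j}"
      using koszul_edge_range[OF e] unfolding koszul_edge_def by blast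
    with e isolated[of t] show False
      by (simp add: koszul_edge_def)
  qed
  have "c {l} = 0" if "l \<noteq> j" for l
  proof -
    have "\<not> (koszul_edge I \<alpha>)\<^sup>*\<^sup>* j l"
      using no_edge that by (metis converse_rtranclpE)
    then have "{l} \<notin> kbasis I \<alpha> 1"
      using conn True by (auto simp: koszul_connected_def)
    then show ?thesis
      using c(1) by (simp add: kchain_def)
  qed
  moreover have "j \<in> {0,1,2}"
    using True by (simp add: kbasis_def)
  ultimately show ?thesis
    using c(2) by auto
qed (use c(1) in \<open>simp add: kchain_def\<close>)

lemma koszul_connected_if_tor_vanishes_1:
  assumes tor: "tor_vanishes (k :: 'k::field itself) I 1 \<alpha>"
  shows "koszul_connected I \<alpha>"
  unfolding koszul_connected_def
proof (intro allI impI)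
  fix j l
  assume j: "{j} \<in> kbasis I \<alpha> 1" and l: "{l} \<in> kbasis I \<alpha> 1"
  show "(koszul_edge I \<alpha>)\<^sup>*\<^sup>* j l"
  proof (rule ccontr)
    assume disconnected: "\<not> (koszul_edge I \<alpha>)\<^sup>*\<^sup>* j l"
    then have "j \<noteq> l" by auto
    have "j \<in> {0,1,2}" "l \<in> {0,1,2}"
      using j l by (simp_all add: kbasis_def)
    define c :: "nat set \<Rightarrow> 'k" where
      "c F = (if F = {j} then 1 else if F = {l} then -1 else 0)" for F
    have c: "kchain I \<alpha> 1 c"
      using j l by (auto simp: kchain_def c_def)
    moreover have "kdiff c = (\<lambda>_. 0)"
      using \<open>j \<in> {0,1,2}\<close> \<open>l \<in> {0,1,2}\<close> \<open>j \<noteq> l\<close>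
      by (auto simp: kdiff_1_chain_eq_0_iff[OF c] c_def)
    ultimately obtain b where b: "kchain I \<alpha> 2 b" "kdiff b = c"
      using tor by (auto simp: tor_vanishes_def numeral_2_eq_2)
    from disconnected show False
    proof (rule koszul_isolated_if_not_connected[THEN disjE])
      assume "\<forall>t. \<not> koszul_edge I \<alpha> j t"
      then have "kdiff b {j} = 0"
        using b(1) kdiff_eq_0_at_isolated by blast
      with b(2) show False
        by (simp add: c_def)
    next
      assume "\<forall>t. \<not> koszul_edge I \<alpha> l t"
      then have "kdiff b {l} = 0"
        using b(1) kdiff_eq_0_at_isolated by blast
      with b(2) \<open>j \<noteq> l\<close> show False
        by (simp add: c_def)
    qed
  qed
qed

text \<open>A 1-cycle c is the boundary of the 2-chain with coefficients s, -c{0} - s, s - c{1} on the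
  edges {0,1}, {0,2}, {1,2}, for any s; the point is to choose s so that missing edges get 0.\<close>

lemma ex_koszul_filling_weight:
  assumes conn: "koszul_connected I \<alpha>"
    and c: "kchain I \<alpha> 1 c" "c {0} + c {1} + c {2} = 0"
  obtains s where "{0,1} \<notin> kbasis I \<alpha> 2 \<Longrightarrow> s = 0"
    "{0,2} \<notin> kbasis I \<alpha> 2 \<Longrightarrow> s = - c {0}" "{1,2} \<notin> kbasis I \<alpha> 2 \<Longrightarrow> s = c {1}"
proof -
  let ?E = "\<lambda>F. F \<in> kbasis I \<alpha> 2"
  note isolated = koszul_cycle_eq_0_at_isolated[OF conn c]
  consider "\<not> ?E {0,1}" | "?E {0,1}" "\<not> ?E {0,2}" | "?E {0,1}" "?E {0,2}"
    by blast
  then show thesis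
  proof cases
    case 1
    have "c {0} = 0" if "\<not> ?E {0,2}"
      using 1 that by (intro isolated) auto
    moreover have "c {1} = 0" if "\<not> ?E {1,2}"
      using 1 that by (intro isolated) (auto simp: insert_commute)
    ultimately show thesis
      using 1 by (intro that[of 0]) auto
  next
    case 2
    have "c {2} = 0" if "\<not> ?E {1,2}"
      using 2 that by (intro isolated) (auto simp: insert_commute)
    with c(2) have "c {1} = - c {0}" if "\<not> ?E {1,2}"
      using that by (simp add: eq_neg_iff_add_eq_0 add.commute)
    with 2 show thesis
      by (intro that[of "- c {0}"]) auto
  next
    case 3
    then show thesis
      by (intro that[of "c {1}"]) auto
  qed
qed

lemma tor_vanishes_1_if_koszul_connected:
  assumes conn: "koszul_connected I \<alpha>"
  shows "tor_vanishes (k :: 'k::field itself) I 1 \<alpha>"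
  unfolding tor_vanishes_def
proof (intro allI impI, elim conjE)
  fix c :: "nat set \<Rightarrow> 'k"
  assume c: "kchain I \<alpha> 1 c" "kdiff c = (\<lambda>_. 0)"
  then have cycle: "c {0} + c {1} + c {2} = 0"
    by (simp add: kdiff_1_chain_eq_0_iff)
  obtain s where s: "{0,1} \<notin> kbasis I \<alpha> 2 \<Longrightarrow> s = 0"
    "{0,2} \<notin> kbasis I \<alpha> 2 \<Longrightarrow> s = - c {0}" "{1,2} \<notin> kbasis I \<alpha> 2 \<Longrightarrow> s = c {1}"
    using ex_koszul_filling_weight[OF conn c(1) cycle] by blast
  define b :: "nat set \<Rightarrow> 'k" where
    "b F = (if F = {0,1} then s else if F = {0,2} then - c {0} - s
            else if F = {1,2} then s - c {1} else 0)" for F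
  have "kchain I \<alpha> (Suc 1) b"
    unfolding kchain_def
  proof (intro allI impI)
    fix F assume "F \<notin> kbasis I \<alpha> (Suc 1)"
    then show "b F = 0"
      using s by (auto simp: b_def numeral_2_eq_2 One_nat_def)
  qed
  moreover have "kdiff b = c"
  proof (rule kdiff_eqI[OF \<open>kchain I \<alpha> (Suc 1) b\<close> c(1)])
    fix G :: "nat set"
    assume "G \<subseteq> {0,1,2}" "card G = 1"
    then consider "G = {0}" | "G = {1}" | "G = {2}"
      using subset_012_cases[of G] by fastforce
    then show "kdiff b G = c G"
    proof cases
      case 3
      have "c {2} = - c {0} - c {1}"
        using cycle by (simp add: algebra_simps eq_neg_iff_add_eq_0)
      with 3 show ?thesis
        by (simp add: kdiff_simps b_def face_eq_iff)
    qed (simp_all add: kdiff_simps b_def face_eq_iff)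
  qed
  ultimately show "\<exists>b. kchain I \<alpha> (Suc 1) b \<and> kdiff b = c"
    by blast
qed

lemma tor_vanishes_1_iff: "tor_vanishes (k :: 'k::field itself) I 1 \<alpha> \<longleftrightarrow> koszul_connected I \<alpha>"
  using koszul_connected_if_tor_vanishes_1 tor_vanishes_1_if_koszul_connected by blast

section \<open>Connectivity of the dual graphs\<close>

definition divisor_gens :: "mono set \<Rightarrow> mono \<Rightarrow> mono set" where
  "divisor_gens I \<alpha> = {h \<in> mingens I. mdvd h \<alpha>}"

definition dual_edge_below :: "mono set \<Rightarrow> mono \<Rightarrow> mono \<Rightarrow> mono \<Rightarrow> bool" where
  "dual_edge_below I \<alpha> x y \<longleftrightarrow> x \<in> divisor_gens I \<alpha> \<and> y \<in> divisor_gens I \<alpha> \<and> dual_edge x y"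

lemma GI_connected_iff:
  "GI_connected I u v \<longleftrightarrow>
     (\<forall>a\<in>divisor_gens I (mlcm u v). \<forall>b\<in>divisor_gens I (mlcm u v).
        (dual_edge_below I (mlcm u v))\<^sup>*\<^sup>* a b)"
  unfolding GI_connected_def graph_connected_def dual_sub_vertices_def divisor_gens_def
    dual_edge_below_def by simp

lemma dual_edge_below_rtranclp_mono:
  assumes "mdvd \<alpha> \<beta>" "(dual_edge_below I \<alpha>)\<^sup>*\<^sup>* x y"
  shows "(dual_edge_below I \<beta>)\<^sup>*\<^sup>* x y"
proof -
  have "dual_edge_below I \<beta> x' y'" if "dual_edge_below I \<alpha> x' y'" for x' y'
    using that assms(1) mdvd_trans unfolding dual_edge_below_def divisor_gens_def by blast
  with assms(2) show ?thesis
    by (metis mono_rtranclp)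
qed

lemma dual_edge_below_if_mdeg_le:
  assumes gd: "generated_in_degree I d" and uv: "u \<in> divisor_gens I \<alpha>" "v \<in> divisor_gens I \<alpha>"
    "u \<noteq> v" and deg: "mdeg \<alpha> \<le> d + 1"
  shows "dual_edge_below I \<alpha> u v"
proof -
  have u: "u \<in> mingens I" "mdvd u \<alpha>" and v: "v \<in> mingens I" "mdvd v \<alpha>"
    using uv by (simp_all add: divisor_gens_def)
  have "mlcm u v \<noteq> u"
    using mdvd_mlcm_right[of v u] mingens_minimal[OF u(1), of v] uv(3) v(1) mingens_subset
    by force
  then have "mdeg u < mdeg (mlcm u v)"
    using mdeg_less_if_mdvd[OF mdvd_mlcm_left[of u v]] by auto
  moreover have "mdeg (mlcm u v) \<le> mdeg \<alpha>"
    using u(2) v(2) by (simp add: mdeg_le_if_mdvd mdvd_mlcm_iff)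
  ultimately show ?thesis
    using uv deg mdeg_mingens[OF gd u(1)] mdeg_mingens[OF gd v(1)]
    by (simp add: dual_edge_below_def dual_edge_def)
qed

lemma rtranclp_koszul_edge_if_mingens:
  assumes "monomial_ideal I" "g \<in> mingens I" "mdvd g \<alpha>"
    and "mexp g t < mexp \<alpha> t" "mexp g s < mexp \<alpha> s"
  shows "(koszul_edge I \<alpha>)\<^sup>*\<^sup>* t s"
proof (cases "t = s")
  case False
  with assms have "koszul_edge I \<alpha> t s"
    by (auto simp: koszul_edge_iff_mingens[OF assms(1)])
  then show ?thesis ..
qed simp

text \<open>If the generators below every facet \<alpha> - e_t are connected, a path from t to s in the Koszul
  graph at \<alpha> lifts to a path in G_I between generators below the facets t and s: consecutive
  facets share a generator below \<alpha> - e_t - e_s.\<close>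

lemma dual_connected_below_if_facets_connected:
  assumes mi: "monomial_ideal I" and koszul: "koszul_connected I \<alpha>"
    and facets: "\<And>t x y. x \<in> divisor_gens I \<alpha> \<Longrightarrow> y \<in> divisor_gens I \<alpha> \<Longrightarrow>
       mexp x t < mexp \<alpha> t \<Longrightarrow> mexp y t < mexp \<alpha> t \<Longrightarrow> (dual_edge_below I \<alpha>)\<^sup>*\<^sup>* x y"
    and uv: "u \<in> divisor_gens I \<alpha>" "v \<in> divisor_gens I \<alpha>" "u \<noteq> \<alpha>" "v \<noteq> \<alpha>"
  shows "(dual_edge_below I \<alpha>)\<^sup>*\<^sup>* u v"
proof -
  let ?R = "dual_edge_below I \<alpha>"
  have walk: "?R\<^sup>*\<^sup>* x y"
    if "(koszul_edge I \<alpha>)\<^sup>*\<^sup>* t s" "x \<in> divisor_gens I \<alpha>" "mexp x t < mexp \<alpha> t"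
      "y \<in> divisor_gens I \<alpha>" "mexp y s < mexp \<alpha> s" for t s x y
    using that(1,4,5)
  proof (induction arbitrary: y rule: rtranclp_induct)
    case base
    then show ?case using facets that(2,3) by blast
  next
    case (step s s')
    obtain g where g: "g \<in> divisor_gens I \<alpha>" "mexp g s < mexp \<alpha> s" "mexp g s' < mexp \<alpha> s'"
      using step.hyps(2) by (auto simp: koszul_edge_iff_mingens[OF mi] divisor_gens_def)
    have "?R\<^sup>*\<^sup>* x g"
      using step.IH g(1,2) .
    also have "?R\<^sup>*\<^sup>* g y"
      using facets g(1,3) step.prems by blast
    finally show ?case .
  qed
  have u: "u \<in> mingens I" "mdvd u \<alpha>" and v: "v \<in> mingens I" "mdvd v \<alpha>"
    using uv by (simp_all add: divisor_gens_def)
  obtain j l where j: "mexp u j < mexp \<alpha> j" and l: "mexp v l < mexp \<alpha> l"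
    using ex_mexp_less_if_mdvd u(2) v(2) uv(3,4) by metis
  have "{j} \<in> kbasis I \<alpha> 1" "{l} \<in> kbasis I \<alpha> 1"
    using u v j l unfolding kbasis_singleton_iff_mingens[OF mi] by blast+
  then have "(koszul_edge I \<alpha>)\<^sup>*\<^sup>* j l"
    using koszul by (simp add: koszul_connected_def)
  then show ?thesis
    using walk uv j l by blast
qed

lemma dual_connected_below_if_koszul_connected:
  assumes mi: "monomial_ideal I" and gd: "generated_in_degree I d"
    and koszul: "\<And>\<beta>. d + 2 \<le> mdeg \<beta> \<Longrightarrow> koszul_connected I \<beta>"
  shows "u \<in> divisor_gens I \<alpha> \<Longrightarrow> v \<in> divisor_gens I \<alpha> \<Longrightarrow> (dual_edge_below I \<alpha>)\<^sup>*\<^sup>* u v"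
proof (induction "mdeg \<alpha>" arbitrary: \<alpha> u v rule: less_induct)
  case less
  consider "u = v" | "u \<noteq> v" "mdeg \<alpha> \<le> d + 1" | "d + 2 \<le> mdeg \<alpha>"
    by linarith
  then show ?case
  proof cases
    case 2
    then show ?thesis
      using dual_edge_below_if_mdeg_le[OF gd less.prems] by blast
  next
    case 3
    have facet: "(dual_edge_below I \<alpha>)\<^sup>*\<^sup>* x y"
      if "x \<in> divisor_gens I \<alpha>" "y \<in> divisor_gens I \<alpha>" "mexp x t < mexp \<alpha> t" "mexp y t < mexp \<alpha> t"
      for t x y
    proof -
      let ?\<beta> = "mono_minus_set \<alpha> {t}"
      have "t \<in> {0,1,2}"
        using that(3) mexp_eq_0[of t \<alpha>] by auto
      then have "mdeg ?\<beta> < mdeg \<alpha>"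
        using mdeg_mono_minus_set[of "{t}" \<alpha>] that(3) by simp
      moreover have "x \<in> divisor_gens I ?\<beta>" "y \<in> divisor_gens I ?\<beta>"
        using that mdvd_mono_minus_setI by (auto simp: divisor_gens_def)
      ultimately have "(dual_edge_below I ?\<beta>)\<^sup>*\<^sup>* x y"
        by (rule less.hyps)
      then show ?thesis
        by (rule dual_edge_below_rtranclp_mono[OF mdvd_mono_minus_set_self])
    qed
    have "mdeg u = d" "mdeg v = d"
      using less.prems mdeg_mingens[OF gd] by (simp_all add: divisor_gens_def)
    with 3 have "u \<noteq> \<alpha>" "v \<noteq> \<alpha>"
      by auto
    moreover have "koszul_connected I \<alpha>"
      using koszul 3 by blast
    ultimately show ?thesis
      using dual_connected_below_if_facets_connected[OF mi _ _ less.prems] facet by blast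
  qed simp
qed

text \<open>Conversely, a path in G_I(u, v) projects to a path in the Koszul graph at any \<alpha> above
  lcm(u, v) of degree at least d + 2: the lcm of adjacent generators has degree d + 1, so it
  lies below some facet of \<alpha>.\<close>

lemma koszul_path_if_dual_path:
  assumes mi: "monomial_ideal I" and gd: "generated_in_degree I d" and deg: "d + 2 \<le> mdeg \<alpha>"
    and "mdvd \<beta> \<alpha>" and path: "(dual_edge_below I \<beta>)\<^sup>*\<^sup>* u x"
    and u: "mexp u j < mexp \<alpha> j"
  obtains t where "mexp x t < mexp \<alpha> t" "(koszul_edge I \<alpha>)\<^sup>*\<^sup>* j t"
  using path that
proof (induction arbitrary: thesis rule: rtranclp_induct)
  case base
  then show ?case using u by blast
next
  case (step x y)
  then obtain t where t: "mexp x t < mexp \<alpha> t" "(koszul_edge I \<alpha>)\<^sup>*\<^sup>* j t"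
    by blast
  have xy: "x \<in> mingens I" "y \<in> mingens I" "mdvd x \<alpha>" "mdvd y \<alpha>" "dual_edge x y"
    using step.hyps(2) \<open>mdvd \<beta> \<alpha>\<close> mdvd_trans
    unfolding dual_edge_below_def divisor_gens_def by blast+
  then have "mdeg (mlcm x y) = d + 1"
    using mdeg_mingens[OF gd] by (simp add: dual_edge_def)
  with deg have "mlcm x y \<noteq> \<alpha>"
    by auto
  then obtain s where "mexp (mlcm x y) s < mexp \<alpha> s"
    using ex_mexp_less_if_mdvd xy(3,4) by (metis mdvd_mlcm_iff)
  then have s: "mexp x s < mexp \<alpha> s" "mexp y s < mexp \<alpha> s"
    by (simp_all add: mexp_mlcm)
  have "(koszul_edge I \<alpha>)\<^sup>*\<^sup>* j s"
    using t(2) rtranclp_koszul_edge_if_mingens[OF mi xy(1,3) t(1) s(1)] by (rule rtranclp_trans)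
  with s(2) show ?case
    by (rule step.prems)
qed

lemma koszul_connected_if_GI_connected:
  assumes mi: "monomial_ideal I" and gd: "generated_in_degree I d"
    and GI: "\<forall>u\<in>mingens I. \<forall>v\<in>mingens I. GI_connected I u v" and deg: "d + 2 \<le> mdeg \<alpha>"
  shows "koszul_connected I \<alpha>"
  unfolding koszul_connected_def
proof (intro allI impI)
  fix j l
  assume "{j} \<in> kbasis I \<alpha> 1" "{l} \<in> kbasis I \<alpha> 1"
  then obtain u v where u: "u \<in> mingens I" "mdvd u \<alpha>" "mexp u j < mexp \<alpha> j"
    and v: "v \<in> mingens I" "mdvd v \<alpha>" "mexp v l < mexp \<alpha> l"
    unfolding kbasis_singleton_iff_mingens[OF mi] by blast
  have "u \<in> divisor_gens I (mlcm u v)" "v \<in> divisor_gens I (mlcm u v)"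
    using u v by (simp_all add: divisor_gens_def mdvd_mlcm_left mdvd_mlcm_right)
  with GI u v have "(dual_edge_below I (mlcm u v))\<^sup>*\<^sup>* u v"
    by (simp add: GI_connected_iff)
  moreover have "mdvd (mlcm u v) \<alpha>"
    using u v by (simp add: mdvd_mlcm_iff)
  ultimately obtain t where "mexp v t < mexp \<alpha> t" "(koszul_edge I \<alpha>)\<^sup>*\<^sup>* j t"
    using koszul_path_if_dual_path[OF mi gd deg] u(3) by metis
  then show "(koszul_edge I \<alpha>)\<^sup>*\<^sup>* j l"
    using rtranclp_koszul_edge_if_mingens[OF mi v(1,2) _ v(3)] by (metis rtranclp_trans)
qed

lemma all_GI_connected_iff_tor_1:
  fixes k :: "'k::field itself"
  assumes "monomial_ideal I" "generated_in_degree I d"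
  shows "(\<forall>u\<in>mingens I. \<forall>v\<in>mingens I. GI_connected I u v) \<longleftrightarrow>
           (\<forall>\<alpha>. d + 2 \<le> mdeg \<alpha> \<longrightarrow> tor_vanishes k I 1 \<alpha>)"
  unfolding tor_vanishes_1_iff
  using koszul_connected_if_GI_connected[OF assms] dual_connected_below_if_koszul_connected[OF assms]
  by (auto simp: GI_connected_iff)

section \<open>Bad configurations\<close>

lemma shadow_nonempty_iff: "shadow d f \<noteq> {} \<longleftrightarrow> d \<le> mdeg f"
proof
  assume "shadow d f \<noteq> {}"
  then show "d \<le> mdeg f"
    by (auto simp: shadow_def dest: mdeg_le_if_mdvd)
next
  assume d: "d \<le> mdeg f"
  obtain a b c where f: "f = (a, b, c)"
    by (cases f)
  have "(min d a, min (d - min d a) b, d - min d a - min (d - min d a) b) \<in> shadow d f"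
    using d by (auto simp: shadow_def f)
  then show "shadow d f \<noteq> {}"
    by blast
qed

lemma shadow_meets_mingens_iff:
  assumes "monomial_ideal I" "generated_in_degree I d"
  shows "shadow d m \<inter> mingens I \<noteq> {} \<longleftrightarrow> m \<in> I"
proof
  assume "shadow d m \<inter> mingens I \<noteq> {}"
  then show "m \<in> I"
    using monomial_idealD[OF assms(1)] mingens_subset unfolding shadow_def by blast
next
  assume "m \<in> I"
  then obtain g where "g \<in> mingens I" "mdvd g m"
    by (rule ex_mingens_mdvd)
  then show "shadow d m \<inter> mingens I \<noteq> {}"
    using mdeg_mingens[OF assms(2)] unfolding shadow_def by blast
qed

lemma bad_configuration_iff:
  assumes "monomial_ideal I" "generated_in_degree I d"
  shows "bad_configuration I d \<longleftrightarrow>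
           (\<exists>f. d \<le> mdeg f \<and> f \<notin> I \<and> mx f \<in> I \<and> my f \<in> I \<and> mz f \<in> I)"
proof
  assume "bad_configuration I d"
  then obtain f where f: "shadow d f \<noteq> {}" "\<forall>m\<in>shadow d f. m \<notin> I"
    and xyz: "shadow d (mx f) \<inter> mingens I \<noteq> {}" "shadow d (my f) \<inter> mingens I \<noteq> {}"
      "shadow d (mz f) \<inter> mingens I \<noteq> {}"
    unfolding bad_configuration_def by blast
  have "f \<notin> I"
    using f(2) shadow_meets_mingens_iff[OF assms, of f] mingens_subset by blast
  moreover have "d \<le> mdeg f"
    using f(1) shadow_nonempty_iff by blast
  moreover have "mx f \<in> I" "my f \<in> I" "mz f \<in> I"
    using xyz shadow_meets_mingens_iff[OF assms] by blast+
  ultimately show "\<exists>f. d \<le> mdeg f \<and> f \<notin> I \<and> mx f \<in> I \<and> my f \<in> I \<and> mz f \<in> I"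
    by blast
next
  assume "\<exists>f. d \<le> mdeg f \<and> f \<notin> I \<and> mx f \<in> I \<and> my f \<in> I \<and> mz f \<in> I"
  then obtain f where f: "d \<le> mdeg f" "f \<notin> I" and xyz: "mx f \<in> I" "my f \<in> I" "mz f \<in> I"
    by blast
  have "shadow d f \<noteq> {}"
    using f(1) shadow_nonempty_iff by blast
  moreover have "mdeg m = d \<and> m \<notin> I" if "m \<in> shadow d f" for m
    using that f(2) monomial_idealD[OF assms(1)] unfolding shadow_def by blast
  moreover have "shadow d (mx f) \<inter> mingens I \<noteq> {}" "shadow d (my f) \<inter> mingens I \<noteq> {}"
    "shadow d (mz f) \<inter> mingens I \<noteq> {}"
    using xyz shadow_meets_mingens_iff[OF assms] by blast+
  ultimately show "bad_configuration I d"
    unfolding bad_configuration_def by blast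
qed

lemma kbasis_edges_iff:
  "({0,1} \<in> kbasis I \<alpha> 2 \<and> {0,2} \<in> kbasis I \<alpha> 2 \<and> {1,2} \<in> kbasis I \<alpha> 2) \<longleftrightarrow>
     (\<exists>f. \<alpha> = mx (my (mz f)) \<and> mx f \<in> I \<and> my f \<in> I \<and> mz f \<in> I)"
proof
  assume edges: "{0,1} \<in> kbasis I \<alpha> 2 \<and> {0,2} \<in> kbasis I \<alpha> 2 \<and> {1,2} \<in> kbasis I \<alpha> 2"
  obtain a b c where \<alpha>: "\<alpha> = (a, b, c)"
    by (cases \<alpha>)
  with edges have "1 \<le> a" "1 \<le> b" "1 \<le> c"
    by (auto simp: kbasis_def)
  with edges \<alpha> show "\<exists>f. \<alpha> = mx (my (mz f)) \<and> mx f \<in> I \<and> my f \<in> I \<and> mz f \<in> I"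
    by (intro exI[of _ "(a - 1, b - 1, c - 1)"])
      (auto simp: kbasis_def mono_minus_set_def mx_def my_def mz_def)
next
  assume "\<exists>f. \<alpha> = mx (my (mz f)) \<and> mx f \<in> I \<and> my f \<in> I \<and> mz f \<in> I"
  then show "{0,1} \<in> kbasis I \<alpha> 2 \<and> {0,2} \<in> kbasis I \<alpha> 2 \<and> {1,2} \<in> kbasis I \<alpha> 2"
    by (auto simp: kbasis_def mono_minus_set_def mx_def my_def mz_def)
qed

lemma kbasis_top_iff: "{0,1,2} \<in> kbasis I (mx (my (mz f))) 3 \<longleftrightarrow> f \<in> I"
  by (cases f) (simp add: kbasis_def mono_minus_set_def mx_def my_def mz_def)

lemma not_bad_configuration_iff_tor_2:
  fixes k :: "'k::field itself"
  assumes "monomial_ideal I" "generated_in_degree I d"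
  shows "\<not> bad_configuration I d \<longleftrightarrow> (\<forall>\<alpha>. d + 3 \<le> mdeg \<alpha> \<longrightarrow> tor_vanishes k I 2 \<alpha>)"
proof -
  have deg: "mdeg (mx (my (mz f))) = mdeg f + 3" for f
    by (simp add: mdeg_mx mdeg_my mdeg_mz)
  show ?thesis
    unfolding bad_configuration_iff[OF assms] tor_vanishes_2_iff
    using kbasis_edges_iff kbasis_top_iff deg by (metis add_le_cancel_right)
qed

lemma tor_vanishes_below:
  assumes "generated_in_degree I d" "mdeg \<alpha> < d + i"
  shows "tor_vanishes k I i \<alpha>"
proof (rule tor_vanishes_if_kbasis_empty)
  show "kbasis I \<alpha> i = {}"
    using mdeg_ge_if_kbasis[OF assms(1)] assms(2) by fastforce
qed

lemma tor_vanishes_0_above: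
  assumes mi: "monomial_ideal I" and gd: "generated_in_degree I d" and deg: "d < mdeg \<alpha>"
  shows "tor_vanishes k I 0 \<alpha>"
proof (rule tor_vanishes_0I)
  assume "\<alpha> \<in> I"
  then obtain g where g: "g \<in> mingens I" "mdvd g \<alpha>"
    by (rule ex_mingens_mdvd)
  moreover have "g \<noteq> \<alpha>"
    using mdeg_mingens[OF gd g(1)] deg by auto
  ultimately obtain t where "mexp g t < mexp \<alpha> t"
    by (metis ex_mexp_less_if_mdvd)
  with g show "\<exists>t. {t} \<in> kbasis I \<alpha> 1"
    unfolding kbasis_singleton_iff_mingens[OF mi] by blast
qed

lemma has_linear_resolution_iff_tor_1_2:
  fixes k :: "'k::field itself"
  assumes mi: "monomial_ideal I" and gd: "generated_in_degree I d"
  shows "has_linear_resolution k I d \<longleftrightarrow>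
           (\<forall>\<alpha>. d + 2 \<le> mdeg \<alpha> \<longrightarrow> tor_vanishes k I 1 \<alpha>) \<and>
           (\<forall>\<alpha>. d + 3 \<le> mdeg \<alpha> \<longrightarrow> tor_vanishes k I 2 \<alpha>)"
proof
  assume linear: "has_linear_resolution k I d"
  have "tor_vanishes k I i \<alpha>" if "d + i + 1 \<le> mdeg \<alpha>" for i \<alpha>
  proof -
    from that have "mdeg \<alpha> - i \<noteq> d" "mdeg \<alpha> = i + (mdeg \<alpha> - i)"
      by auto
    with linear show ?thesis
      unfolding has_linear_resolution_def betti_zero_def by blast
  qed
  then show "(\<forall>\<alpha>. d + 2 \<le> mdeg \<alpha> \<longrightarrow> tor_vanishes k I 1 \<alpha>) \<and>
      (\<forall>\<alpha>. d + 3 \<le> mdeg \<alpha> \<longrightarrow> tor_vanishes k I 2 \<alpha>)"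
    by simp
next
  assume high: "(\<forall>\<alpha>. d + 2 \<le> mdeg \<alpha> \<longrightarrow> tor_vanishes k I 1 \<alpha>) \<and>
      (\<forall>\<alpha>. d + 3 \<le> mdeg \<alpha> \<longrightarrow> tor_vanishes k I 2 \<alpha>)"
  show "has_linear_resolution k I d"
    unfolding has_linear_resolution_def betti_zero_def
  proof (intro allI impI)
    fix i j \<alpha>
    assume "j \<noteq> d" "mdeg \<alpha> = i + j"
    then consider "mdeg \<alpha> < d + i" | "i = 0" "d < mdeg \<alpha>" | "i = 1" "d + 2 \<le> mdeg \<alpha>"
      | "i = 2" "d + 3 \<le> mdeg \<alpha>" | "3 \<le> i"
      by linarith
    then show "tor_vanishes k I i \<alpha>"
    proof cases
      case 1
      with gd show ?thesis by (rule tor_vanishes_below)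
    next
      case 2
      with tor_vanishes_0_above[OF mi gd] show ?thesis by blast
    qed (use high tor_vanishes_ge_3 in blast)+
  qed
qed

theorem mainTheorem4:
  fixes k :: "'k::field itself" and I :: "mono set" and d :: nat
  assumes "monomial_ideal I"
    and "generated_in_degree I d"
  shows "has_linear_resolution k I d \<longleftrightarrow>
           ((\<forall>u\<in>mingens I. \<forall>v\<in>mingens I. GI_connected I u v) \<and> \<not> bad_configuration I d)"
  using has_linear_resolution_iff_tor_1_2[OF assms] all_GI_connected_iff_tor_1[OF assms]
    not_bad_configuration_iff_tor_2[OF assms] by blast

end
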